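(* In the CDN routing model described in the context, under any routing policy the number of pending requests at any surrogate server $S_i$ is (almost surely, at all times) bounded by $\lceil\psi\mu_i-1\rceil$.
   Context: A CDN has $m$ surrogate servers $S_1,\dots,S_m$ at fixed points $x_1,\dots,x_m$ of a planar network region $G$ of area $\mathcal{A}$. Requests arrive as a Poisson process of rate $\lambda$ with locations i.i.d. uniform on $G$. Server $S_i$ serves requests first-come-first-served with exponential service times of rate $\mu_i$ and unlimited queue; the system starts empty. There is a fixed latency bound $\psi>0$. If $n_i(t)$ requests are pending at $S_i$ at time $t$, let $A_i(t)=\{x\in G:\|x-x_i\|\le\psi-(n_i(t)+1)/\mu_i\}$ (empty if the radius is negative). A routing policy may send a request arriving at time $t$ from location $x$ only to a server $S_i$ with $x\in A_i(t)$ (the requests it can serve within latency $\psi$), or to no surrogate server. *)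

theory Defs
  imports "HOL-Probability.Probability"
begin

text \<open>Indices of the primitive random variables of the CDN model:
  IA k = k-th interarrival time, LOC k = location of request k,
  SRV i k = service time of request k if it is served by server i.\<close>
datatype cdn_rv = IA nat | LOC nat | SRV nat nat

text \<open>Arrival time of request k (requests numbered 0,1,2,... in arrival order):
  sum of the first k+1 interarrival times (Poisson process started at time 0).\<close>
definition arrival_time :: "(nat \<Rightarrow> real) \<Rightarrow> nat \<Rightarrow> real" where
  "arrival_time E k = (\<Sum>j\<le>k. E j)"

text \<open>Time at which server i has finished all requests among 0..k-1 routed to it
  (FCFS, single server, system initially empty).\<close>
primrec busy_until :: "(nat \<Rightarrow> real) \<Rightarrow> (nat \<Rightarrow> nat option) \<Rightarrow> (nat \<Rightarrow> nat \<Rightarrow> real)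
    \<Rightarrow> nat \<Rightarrow> nat \<Rightarrow> real" where
  "busy_until T r s i 0 = 0"
| "busy_until T r s i (Suc k) =
     (if r k = Some i then max (T k) (busy_until T r s i k) + s i k
      else busy_until T r s i k)"

text \<open>Departure time of request k (requests not routed to a surrogate leave at once).\<close>
definition departure :: "(nat \<Rightarrow> real) \<Rightarrow> (nat \<Rightarrow> nat option) \<Rightarrow> (nat \<Rightarrow> nat \<Rightarrow> real)
    \<Rightarrow> nat \<Rightarrow> real" where
  "departure T r s k = (case r k of None \<Rightarrow> T k
      | Some i \<Rightarrow> max (T k) (busy_until T r s i k) + s i k)"

definition pending :: "(nat \<Rightarrow> real) \<Rightarrow> (nat \<Rightarrow> nat option) \<Rightarrow> (nat \<Rightarrow> nat \<Rightarrow> real)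
    \<Rightarrow> nat \<Rightarrow> real \<Rightarrow> nat" where
  "pending T r s i t = card {k. r k = Some i \<and> T k \<le> t \<and> t < departure T r s k}"

definition pending_before :: "(nat \<Rightarrow> real) \<Rightarrow> (nat \<Rightarrow> nat option) \<Rightarrow> (nat \<Rightarrow> nat \<Rightarrow> real)
    \<Rightarrow> nat \<Rightarrow> nat \<Rightarrow> nat" where
  "pending_before T r s i k = card {j. j < k \<and> r j = Some i \<and> T k < departure T r s j}"

end

theory Submission
  imports Defs
begin

text \<open>A request can join the queue of \<open>S\<^sub>i\<close> only if the requests it finds there, plus itself,
  number at most \<open>\<mu>\<^sub>i (\<psi> - d)\<close>, where \<open>d\<close> is its distance to \<open>x\<^sub>i\<close>. At any time \<open>t\<close>, the
  request pending at \<open>S\<^sub>i\<close> that arrived last found all the other pending ones still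
  waiting, so their number is below \<open>\<psi> \<mu>\<^sub>i\<close> as soon as \<open>d > 0\<close>. Since request
  locations are uniform on \<open>G\<close>, almost surely no request sits exactly at a server, and
  \<open>n < \<psi> \<mu>\<^sub>i\<close> for an integer \<open>n\<close> means \<open>n \<le> \<lceil>\<psi> \<mu>\<^sub>i - 1\<rceil>\<close>.\<close>

lemma pending_le_Suc_pending_before:
  assumes "pending T r s i t \<noteq> 0"
  obtains k where "r k = Some i" and "pending T r s i t \<le> Suc (pending_before T r s i k)"
proof -
  define P where "P = {k. r k = Some i \<and> T k \<le> t \<and> t < departure T r s k}"
  have P_fin: "finite P" and P_ne: "P \<noteq> {}"
    using assms by (auto simp: pending_def P_def[symmetric] intro: card_ge_0_finite)
  define k where "k = Max P"
  have "k \<in> P"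
    using P_fin P_ne by (simp add: k_def)
  have "P - {k} \<subseteq> {j. j < k \<and> r j = Some i \<and> T k < departure T r s j}"
  proof
    fix j assume j: "j \<in> P - {k}"
    then have "j \<le> k"
      using P_fin by (simp add: k_def)
    with j have "j < k"
      by auto
    with j \<open>k \<in> P\<close> show "j \<in> {j. j < k \<and> r j = Some i \<and> T k < departure T r s j}"
      by (auto simp: P_def)
  qed
  then have "card (P - {k}) \<le> pending_before T r s i k"
    unfolding pending_before_def by (intro card_mono) auto
  moreover have "pending T r s i t = Suc (card (P - {k}))"
    unfolding pending_def P_def[symmetric] using P_fin \<open>k \<in> P\<close> by (rule card_Suc_Diff1[symmetric])
  moreover have "r k = Some i"
    using \<open>k \<in> P\<close> by (simp add: P_def)
  ultimately show thesis
    using that by simp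
qed

lemma pending_less_if_pending_before_less:
  assumes "0 < a" and "\<And>k. r k = Some i \<Longrightarrow> real (pending_before T r s i k) + 1 < a"
  shows "real (pending T r s i t) < a"
proof (cases "pending T r s i t = 0")
  case False
  then obtain k where "r k = Some i" "pending T r s i t \<le> Suc (pending_before T r s i k)"
    by (rule pending_le_Suc_pending_before)
  with assms(2)[of k] show ?thesis
    by linarith
qed (use assms(1) in simp)

lemma AE_uniform_measure_distr_notin_countable:
  fixes Y :: "'a \<Rightarrow> 'b::euclidean_space"
  assumes "Y \<in> borel_measurable M" and "distr M lborel Y = uniform_measure lborel G"
    and "G \<in> sets lborel" and "countable C"
  shows "AE \<omega> in M. Y \<omega> \<notin> C"
proof (rule AE_distrD[where M' = lborel])
  show "Y \<in> measurable M lborel"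
    using assms(1) by simp
  have "AE y in lborel. y \<notin> C"
    using assms(4) by (intro AE_not_in countable_imp_null_set_lborel)
  then show "AE y in distr M lborel Y. y \<notin> C"
    unfolding assms(2) using assms(3) by (intro AE_uniform_measureI) auto
qed

theorem lemma3:
  fixes M :: "'a measure"
    and m :: nat and x :: "nat \<Rightarrow> real^2" and G :: "(real^2) set"
    and lam psi :: real and mu :: "nat \<Rightarrow> real"
    and E :: "nat \<Rightarrow> 'a \<Rightarrow> real"
    and Y :: "nat \<Rightarrow> 'a \<Rightarrow> real^2"
    and sv :: "nat \<Rightarrow> nat \<Rightarrow> 'a \<Rightarrow> real"
    and r :: "nat \<Rightarrow> 'a \<Rightarrow> nat option"
  assumes "prob_space M"
    and "G \<in> sets lborel" and "0 < emeasure lborel G" and "emeasure lborel G < \<infinity>"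
    and "\<And>i. i < m \<Longrightarrow> x i \<in> G"
    and "0 < lam" and "\<And>i. i < m \<Longrightarrow> 0 < mu i" and "0 < psi"
    and "\<And>k. distributed M lborel (E k) (exponential_density lam)"
    and "\<And>k. Y k \<in> borel_measurable M"
    and "\<And>k. distr M lborel (Y k) = uniform_measure lborel G"
    and "\<And>i k. i < m \<Longrightarrow> distributed M lborel (sv i k) (exponential_density (mu i))"
    and "prob_space.indep_sets M
           (\<lambda>j. sets (case j of IA k \<Rightarrow> vimage_algebra (space M) (E k) borel
                           | LOC k \<Rightarrow> vimage_algebra (space M) (Y k) borel
                           | SRV i k \<Rightarrow> vimage_algebra (space M) (sv i k) borel))
           ({IA k | k. True} \<union> {LOC k | k. True} \<union> {SRV i k | i k. i < m})"
    and "\<And>\<omega> k i. \<omega> \<in> space M \<Longrightarrow> r k \<omega> = Some i \<Longrightarrow>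
           i < m \<and>
           dist (Y k \<omega>) (x i)
             \<le> psi - (real (pending_before (arrival_time (\<lambda>j. E j \<omega>)) (\<lambda>j. r j \<omega>)
                                 (\<lambda>i' j. sv i' j \<omega>) i k) + 1) / mu i"
  shows "AE \<omega> in M. \<forall>i<m. \<forall>t::real.
           int (pending (arrival_time (\<lambda>j. E j \<omega>)) (\<lambda>j. r j \<omega>) (\<lambda>i' j. sv i' j \<omega>) i t)
             \<le> \<lceil>psi * mu i - 1\<rceil>"
proof -
  have "AE \<omega> in M. Y k \<omega> \<notin> range x" for k
    using assms(10,11,2) by (rule AE_uniform_measure_distr_notin_countable) simp
  then have "AE \<omega> in M. \<forall>k. Y k \<omega> \<notin> range x"
    by (simp add: AE_all_countable)
  with AE_space show ?thesis
  proof (eventually_elim, intro allI impI)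
    fix \<omega> i t
    assume \<omega>: "\<omega> \<in> space M" and off_servers: "\<forall>k. Y k \<omega> \<notin> range x" and "i < m"
    let ?n = "pending_before (arrival_time (\<lambda>j. E j \<omega>)) (\<lambda>j. r j \<omega>) (\<lambda>i' j. sv i' j \<omega>) i"
    have "0 < mu i"
      using assms(7) \<open>i < m\<close> .
    have "real (?n k) + 1 < psi * mu i" if "r k \<omega> = Some i" for k
    proof -
      have "0 < dist (Y k \<omega>) (x i)"
        using off_servers by auto
      with assms(14)[OF \<omega> that] have "(real (?n k) + 1) / mu i < psi"
        by linarith
      with \<open>0 < mu i\<close> show ?thesis
        by (simp add: divide_less_eq)
    qed
    then have "real (pending (arrival_time (\<lambda>j. E j \<omega>)) (\<lambda>j. r j \<omega>)
        (\<lambda>i' j. sv i' j \<omega>) i t) < psi * mu i"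
      using \<open>0 < mu i\<close> assms(8) by (intro pending_less_if_pending_before_less) simp_all
    then show "int (pending (arrival_time (\<lambda>j. E j \<omega>)) (\<lambda>j. r j \<omega>)
        (\<lambda>i' j. sv i' j \<omega>) i t) \<le> \<lceil>psi * mu i - 1\<rceil>"
      by (subst le_ceiling_iff) simp
  qed
qed

end
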